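(* Let $n\ge 1$ and let $L\ge 1$ be an integer together with an injective labelling $\ell\mapsto(p_\ell,q_\ell)$ of $\{0,\dots,L-1\}$ by pairs with $0\le p_\ell,q_\ell\le n-1$. Consider the Hilbert space $\mathbb{C}^2\otimes\mathbb{C}^{L}\otimes(\mathbb{C}^2)^{\otimes n}$ with computational basis states $\ket{v}\ket{l}\ket{j}$, where $v\in\{0,1\}$ (validation qubit), $l\in\{0,\dots,L-1\}$ (selection register) and $j\in\{0,1\}^n$ (Fock register). Say that $(l,j)$ is valid if, writing $(p,q)=(p_l,q_l)$ and $j=j_0j_1\cdots j_{n-1}$, either $p\neq q$, $j_q=1$ and $j_p=0$; or $p=q$ and $j_q=1$. For valid $(l,j)$ let $c(j,l)\in\{0,1\}^n$ be the bit string obtained from $j$ by swapping its $p$-th and $q$-th bits. Suppose that for each $i\in\{0,\dots,L-1\}$ we are given a linear operator $U_i$ acting on computational basis states by \[ U_i\ket{v}\ket{l}\ket{j}=\begin{cases}\ket{0}\ket{l}\ket{c(j,l)} & \text{if } i=l,\ v=1 \text{ and } (l,j)\text{ is valid},\\ \ket{v}\ket{l}\ket{j} & \text{otherwise.}\end{cases} \] Define $O_C=U_0U_1\cdots U_{L-1}\,(X\otimes I)$, where $X$ is the Pauli NOT gate on the validation qubit (so $X$ is applied first). Then for all $l\in\{0,\dots,L-1\}$ and $j\in\{0,1\}^n$, \[ O_C\ket{0}\ket{l}\ket{j}=\begin{cases}\ket{0}\ket{l}\ket{c(j,l)} & \text{if } (l,j)\text{ is valid},\\ \ket{1}\ket{l}\ket{j}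 & \text{otherwise.}\end{cases} \]
   Context: Bit strings $j\in\{0,1\}^n$ label occupation-number (Fock) basis states of $n$ fermionic modes; the pair $(p_l,q_l)$ corresponds to the operator $a^\dagger_{p}a_{q}$ of a pairing Hamiltonian, and validity of $(l,j)$ means $a^\dagger_p a_q\ket{j}\neq 0$, in which case $a^\dagger_p a_q$ maps $\ket{j}$ to $\ket{c(j,l)}$. *)

theory Defs
  imports Main "HOL-Library.Complex_Order" Complex_Main
begin

text \<open>Computational basis states |v>|l>|j>: v is the validation qubit (False = 0, True = 1),
  l the selection register value, j the Fock register bit string (a list of n bits, j ! k = j_k).
  A state of the Hilbert space is its coefficient function on basis states.\<close>

type_synonym basis = "bool \<times> nat \<times> bool list"
type_synonym state = "basis \<Rightarrow> complex"

definition ket :: "basis \<Rightarrow> state" where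
  "ket b = (\<lambda>x. if x = b then 1 else 0)"

definition is_linear_op :: "(state \<Rightarrow> state) \<Rightarrow> bool" where
  "is_linear_op U \<longleftrightarrow>
     (\<forall>\<psi> \<phi>. U (\<lambda>x. \<psi> x + \<phi> x) = (\<lambda>x. U \<psi> x + U \<phi> x)) \<and>
     (\<forall>c \<psi>. U (\<lambda>x. c * \<psi> x) = (\<lambda>x. c * U \<psi> x))"

definition valid :: "nat \<times> nat \<Rightarrow> bool list \<Rightarrow> bool" where
  "valid pq j \<longleftrightarrow> (let p = fst pq; q = snd pq in
      (p \<noteq> q \<and> j ! q \<and> \<not> j ! p) \<or> (p = q \<and> j ! q))"

definition cswap :: "nat \<times> nat \<Rightarrow> bool list \<Rightarrow> bool list" where
  "cswap pq j = (let p = fst pq; q = snd pq in j[p := j ! q, q := j ! p])"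

definition Xop :: "state \<Rightarrow> state" where
  "Xop \<psi> = (\<lambda>(v, l, j). \<psi> (\<not> v, l, j))"

definition OC :: "nat \<Rightarrow> (nat \<Rightarrow> state \<Rightarrow> state) \<Rightarrow> state \<Rightarrow> state" where
  "OC L U = foldr (\<circ>) (map U [0..<L]) id \<circ> Xop"

end

theory Submission
  imports Defs
begin

text \<open>After X sets the validation qubit, the state is \<open>|1>|l>|j>\<close>. Every \<open>U\<^sub>i\<close> with \<open>i \<noteq> l\<close>
  fixes it, so only \<open>U\<^sub>l\<close> acts: it either performs the swap and resets the qubit to 0, or leaves
  the state alone. The operators \<open>U\<^sub>i\<close>, \<open>i < l\<close>, applied afterwards fix the result as well,
  since it has selection register \<open>l \<noteq> i\<close>. Only basis states are ever evaluated.\<close>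

lemma length_cswap [simp]: "length (cswap pq j) = length j"
  by (simp add: cswap_def Let_def)

lemma Xop_ket [simp]: "Xop (ket (v, l, j)) = ket (\<not> v, l, j)"
  by (auto simp: Xop_def ket_def fun_eq_iff)

lemma foldr_comp_fixpoint: "\<forall>f\<in>set fs. f x = x \<Longrightarrow> foldr (\<circ>) fs id x = x"
  by (induction fs) auto

lemma foldr_comp_append_apply:
  "foldr (\<circ>) (fs @ gs) id x = foldr (\<circ>) fs id (foldr (\<circ>) gs id x)"
  by (induction fs) auto

lemma foldr_comp_upt_single_step:
  assumes "m < k"
    and "\<forall>i. m < i \<and> i < k \<longrightarrow> U i x = x"
    and "\<forall>i<m. U i (U m x) = U m x"
  shows "foldr (\<circ>) (map U [0..<k]) id x = U m x"
proof -
  have "[0..<k] = [0..<m] @ [m..<k]"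
    using upt_add_eq_append[of 0 m "k - m"] assms(1) by simp
  also have "[m..<k] = m # [Suc m..<k]"
    using assms(1) by (rule upt_conv_Cons)
  finally show ?thesis
    using assms(2,3) by (simp add: foldr_comp_append_apply foldr_comp_fixpoint del: foldr_append)
qed

theorem theorem2:
  fixes n L :: nat
    and pq :: "nat \<Rightarrow> nat \<times> nat"
    and U :: "nat \<Rightarrow> state \<Rightarrow> state"
  assumes "n \<ge> 1" and "L \<ge> 1"
    and "inj_on pq {..<L}"
    and "\<forall>l<L. fst (pq l) < n \<and> snd (pq l) < n"
    and "\<forall>i<L. is_linear_op (U i)"
    and "\<forall>i<L. \<forall>v l j. l < L \<longrightarrow> length j = n \<longrightarrow>
           U i (ket (v, l, j)) =
             (if i = l \<and> v \<and> valid (pq l) j then ket (False, l, cswap (pq l) j)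
              else ket (v, l, j))"
  shows "\<forall>l<L. \<forall>j. length j = n \<longrightarrow>
           OC L U (ket (False, l, j)) =
             (if valid (pq l) j then ket (False, l, cswap (pq l) j)
              else ket (True, l, j))"
proof (intro allI impI)
  fix l :: nat and j :: "bool list"
  assume l: "l < L" and j: "length j = n"
  have "OC L U (ket (False, l, j)) = foldr (\<circ>) (map U [0..<L]) id (ket (True, l, j))"
    by (simp add: OC_def)
  also have "\<dots> = U l (ket (True, l, j))"
    using l j assms(6) by (intro foldr_comp_upt_single_step) auto
  also have "\<dots> = (if valid (pq l) j then ket (False, l, cswap (pq l) j) else ket (True, l, j))"
    using l j assms(6) by simp
  finally show "OC L U (ket (False, l, j)) =
      (if valid (pq l) j then ket (False, l, cswap (pq l) j) else ket (True, l, j))" .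
qed

end
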